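(* Let $G$ be an $n$-vertex graph of density $p$, and let $\mathcal Q,\mathcal P$ be partitions of $V(G)$ with $\mathcal Q$ refining $\mathcal P$. If $\mathcal D(\mathcal Q,\mathcal P)\ge xpn^2$ (for some $x\ge 0$), then $\mathcal H(\mathcal Q)-\mathcal H(\mathcal P)\ge 2x^2p$.
   Context: The density of $G=(V,E)$ is $2|E|/|V|^2$. $e(X,Y)$ is the number of ordered pairs $(u,v)\in X\times Y$ with $uv\in E(G)$ and $d(X,Y)=e(X,Y)/(|X||Y|)$. $H(x)=x\ln x$, $H(0)=0$. For a partition $\mathcal P$ of $V(G)$, $\mathcal H(\mathcal P)=\sum_{V,V'\in\mathcal P}\frac{|V||V'|}{n^2}H(d(V,V'))$, summed over ordered pairs. For $\mathcal P=\{V_1,\dots,V_k\}$ and a refinement $\mathcal Q$, $\mathcal Q|_{V_i}$ denotes the partition of $V_i$ induced by $\mathcal Q$, and $$\mathcal D(\mathcal Q,\mathcal P)=\frac12\sum_{i,j=1}^k\ \sum_{U\in\mathcal Q|_{V_i},\,U'\in\mathcal Q|_{V_j}}|U||U'|\,|d(U,U')-d(V_i,V_j)|.$$ *)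

theory Defs
  imports Complex_Main "HOL-Library.Disjoint_Sets"
begin

definition simple_graph :: "'a set \<Rightarrow> ('a \<Rightarrow> 'a \<Rightarrow> bool) \<Rightarrow> bool" where
  "simple_graph V E \<longleftrightarrow> finite V \<and> (\<forall>u v. E u v \<longrightarrow> u \<in> V \<and> v \<in> V)
     \<and> (\<forall>u v. E u v \<longrightarrow> E v u) \<and> (\<forall>u. \<not> E u u)"

definition edges :: "('a \<Rightarrow> 'a \<Rightarrow> bool) \<Rightarrow> 'a set set" where
  "edges E = {{u, v} | u v. E u v}"

definition density :: "'a set \<Rightarrow> ('a \<Rightarrow> 'a \<Rightarrow> bool) \<Rightarrow> real" where
  "density V E = 2 * real (card (edges E)) / (real (card V))^2"

definition epairs :: "('a \<Rightarrow> 'a \<Rightarrow> bool) \<Rightarrow> 'a set \<Rightarrow> 'a set \<Rightarrow> nat" where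
  "epairs E X Y = card {(u, v) \<in> X \<times> Y. E u v}"

definition pdens :: "('a \<Rightarrow> 'a \<Rightarrow> bool) \<Rightarrow> 'a set \<Rightarrow> 'a set \<Rightarrow> real" where
  "pdens E X Y = real (epairs E X Y) / (real (card X) * real (card Y))"

definition Hf :: "real \<Rightarrow> real" where
  "Hf x = (if x = 0 then 0 else x * ln x)"

definition Hpart :: "'a set \<Rightarrow> ('a \<Rightarrow> 'a \<Rightarrow> bool) \<Rightarrow> 'a set set \<Rightarrow> real" where
  "Hpart V E P = (\<Sum>X\<in>P. \<Sum>Y\<in>P.
      real (card X) * real (card Y) / (real (card V))^2 * Hf (pdens E X Y))"

definition refines_part :: "'a set set \<Rightarrow> 'a set set \<Rightarrow> bool" where
  "refines_part Q P \<longleftrightarrow> (\<forall>U\<in>Q. \<exists>W\<in>P. U \<subseteq> W)"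

definition Dpart :: "('a \<Rightarrow> 'a \<Rightarrow> bool) \<Rightarrow> 'a set set \<Rightarrow> 'a set set \<Rightarrow> real" where
  "Dpart E Q P = (1/2) * (\<Sum>Vi\<in>P. \<Sum>Vj\<in>P.
      \<Sum>U\<in>{U\<in>Q. U \<subseteq> Vi}. \<Sum>U'\<in>{U'\<in>Q. U' \<subseteq> Vj}.
        real (card U) * real (card U') * \<bar>pdens E U U' - pdens E Vi Vj\<bar>)"

end

theory Submission
  imports Defs
begin

text \<open>
  Inside a pair (W, W') of parts of P, the blocks U \<times> U' of Q carry weights |U| |U'| and
  densities whose weighted mean is d(W, W'). The function H(t) = t ln t satisfies the quantitative
  convexity bound H(a) - H(b) - H'(b)(a - b) \<ge> 3(a - b)^2 / (2a + 4b); completing the square turns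
  it into a bound linear in |a - b|, and averaging gives for every pair a gain of at least
  2x (deviation of the pair) - 2x^2 e(W, W'). Summing over all pairs,
  n^2 (H(Q) - H(P)) \<ge> 4x D(Q, P) - 2x^2 e(V, V) \<ge> 4x^2 p n^2 - 2x^2 p n^2, as e(V, V) \<le> 2|E| = p n^2.
\<close>



lemma ln_ge_rational_bound:
  fixes t :: real
  assumes "t > 0"
  shows "(t - 1) * (5 * t + 1) / (2 * t * (t + 2)) \<le> ln t"
proof -
  define D where "D s = ln s - (s - 1) * (5 * s + 1) / (2 * s * (s + 2))" for s :: real
  have D': "(D has_real_derivative (s - 1)^3 / (s^2 * (s + 2)^2)) (at s)" if "s > 0" for s
  proof -
    have "(D has_real_derivative 1 / s - ((1 * (5 * s + 1) + (s - 1) * 5) * (2 * s * (s + 2))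
            - (s - 1) * (5 * s + 1) * (2 * (s + 2) + 2 * s * 1)) / (2 * s * (s + 2))^2) (at s)"
      unfolding D_def using that by (auto intro!: derivative_eq_intros simp: power2_eq_square)
    moreover have "1 / s - ((1 * (5 * s + 1) + (s - 1) * 5) * (2 * s * (s + 2))
            - (s - 1) * (5 * s + 1) * (2 * (s + 2) + 2 * s * 1)) / (2 * s * (s + 2))^2
          = (s - 1)^3 / (s^2 * (s + 2)^2)"
      using that by (simp add: divide_simps) (simp add: algebra_simps power2_eq_square power3_eq_cube)
    ultimately show ?thesis by simp
  qed
  have cont: "continuous_on {a..b} D" if "a > 0" for a b
    using that by (intro continuous_at_imp_continuous_on ballI DERIV_isCont[OF D']) auto
  have "D 1 \<le> D t"
  proof (cases "1 \<le> t")
    case True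
    show ?thesis
    proof (rule DERIV_nonneg_imp_increasing_open[OF True])
      show "\<exists>y. (D has_real_derivative y) (at s) \<and> 0 \<le> y" if "1 < s" "s < t" for s
        using D' that by force
    qed (use cont in simp)
  next
    case False
    show ?thesis
    proof (rule DERIV_nonpos_imp_decreasing_open[of t 1])
      show "\<exists>y. (D has_real_derivative y) (at s) \<and> y \<le> 0" if "t < s" "s < 1" for s
      proof -
        have "(s - 1)^3 \<le> 0" using that by (simp add: power_le_zero_eq)
        moreover have "(D has_real_derivative (s - 1)^3 / (s^2 * (s + 2)^2)) (at s)"
          using D' that assms by simp
        ultimately show ?thesis by (blast intro: divide_nonpos_nonneg zero_le_power2 mult_nonneg_nonneg)
      qed
    qed (use False cont assms in auto)
  qed
  then show ?thesis by (simp add: D_def)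
qed

text \<open>Here ln b + 1 = H'(b): the right-hand side is the Bregman divergence a ln(a/b) - a + b of H.\<close>

lemma Hf_bregman_ge:
  fixes a b :: real
  assumes "a \<ge> 0" and "b > 0"
  shows "3 * (a - b)^2 / (2 * a + 4 * b) \<le> Hf a - Hf b - (ln b + 1) * (a - b)"
proof (cases "a = 0")
  case True
  then show ?thesis using assms by (simp add: Hf_def power2_eq_square algebra_simps)
next
  case False
  with assms have "a > 0" by simp
  define t where "t = a / b"
  have "t > 0" using \<open>a > 0\<close> assms by (simp add: t_def)
  have bregman: "Hf a - Hf b - (ln b + 1) * (a - b) = a * ln t - a + b"
    using \<open>a > 0\<close> assms by (simp add: Hf_def t_def ln_div algebra_simps)
  have "a = t * b" using assms by (simp add: t_def)
  then have "(a - b) * (5 * a + b) / (2 * (a + 2 * b)) = a * ((t - 1) * (5 * t + 1) / (2 * t * (t + 2)))"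
    using \<open>t > 0\<close> assms by (simp add: divide_simps) (simp add: algebra_simps, smt (verit) mult_pos_pos)
  also have "\<dots> \<le> a * ln t"
    using ln_ge_rational_bound[OF \<open>t > 0\<close>] \<open>a > 0\<close> by (intro mult_left_mono) auto
  finally have "(a - b) * (5 * a + b) / (2 * (a + 2 * b)) \<le> a * ln t" .
  moreover have "(a - b) * (5 * a + b) / (2 * (a + 2 * b)) - a + b = 3 * (a - b)^2 / (2 * a + 4 * b)"
    using \<open>a > 0\<close> assms by (simp add: field_simps power2_eq_square)
  ultimately show ?thesis using bregman by linarith
qed

lemma Hf_bregman_ge_linear:
  fixes a b x :: real
  assumes "a \<ge> 0" and "b > 0"
  shows "2 * x * \<bar>a - b\<bar> - x^2 * (2 * a + 4 * b) / 3 \<le> Hf a - Hf b - (ln b + 1) * (a - b)"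
proof -
  define c where "c = (2 * a + 4 * b) / 3"
  have "c > 0" using assms by (simp add: c_def)
  have "2 * x * \<bar>a - b\<bar> - x^2 * c = \<bar>a - b\<bar>^2 / c - (\<bar>a - b\<bar> - x * c)^2 / c"
    using \<open>c > 0\<close> by (simp add: field_simps power2_eq_square)
  also have "\<dots> \<le> \<bar>a - b\<bar>^2 / c"
    using \<open>c > 0\<close> by simp
  also have "\<dots> = 3 * (a - b)^2 / (2 * a + 4 * b)"
    by (simp add: c_def)
  finally show ?thesis using Hf_bregman_ge[OF assms] by (simp add: c_def)
qed

text \<open>
  Since b is the weighted mean of the a i, the weighted mean of 2 a i + 4 b is 6 b; this turns the
  quadratic term of the pointwise bound into 2 x^2 b.
\<close>

lemma sum_Hf_mean_gain:
  fixes w a :: "'i \<Rightarrow> real" and b x :: real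
  assumes "finite I" and w: "\<And>i. i \<in> I \<Longrightarrow> w i > 0" and a: "\<And>i. i \<in> I \<Longrightarrow> a i \<ge> 0"
    and "b \<ge> 0" and mean: "(\<Sum>i\<in>I. w i * a i) = b * (\<Sum>i\<in>I. w i)"
  shows "2 * x * (\<Sum>i\<in>I. w i * \<bar>a i - b\<bar>) - 2 * x^2 * b * (\<Sum>i\<in>I. w i)
           \<le> (\<Sum>i\<in>I. w i * (Hf (a i) - Hf b))"
proof (cases "b = 0")
  case True
  then have "\<forall>i\<in>I. w i * a i = 0"
    using mean w a sum_nonneg_eq_0_iff[OF \<open>finite I\<close>, of "\<lambda>i. w i * a i"] by force
  then have "\<forall>i\<in>I. a i = 0" using w by force
  then show ?thesis using True by (simp add: Hf_def)
next
  case False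
  with \<open>b \<ge> 0\<close> have "b > 0" by simp
  have "(\<Sum>i\<in>I. w i * (Hf (a i) - Hf b))
      = (\<Sum>i\<in>I. w i * (Hf (a i) - Hf b - (ln b + 1) * (a i - b)))
        + (ln b + 1) * ((\<Sum>i\<in>I. w i * a i) - b * (\<Sum>i\<in>I. w i))"
    by (simp add: algebra_simps sum.distrib sum_subtractf sum_distrib_left)
  also have "\<dots> = (\<Sum>i\<in>I. w i * (Hf (a i) - Hf b - (ln b + 1) * (a i - b)))"
    using mean by simp
  also have "\<dots> \<ge> (\<Sum>i\<in>I. w i * (2 * x * \<bar>a i - b\<bar> - x^2 * (2 * a i + 4 * b) / 3))"
    using Hf_bregman_ge_linear[OF a \<open>b > 0\<close>] w
    by (intro sum_mono mult_left_mono) (auto simp: less_imp_le)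
  moreover have "(\<Sum>i\<in>I. w i * (2 * x * \<bar>a i - b\<bar> - x^2 * (2 * a i + 4 * b) / 3))
      = 2 * x * (\<Sum>i\<in>I. w i * \<bar>a i - b\<bar>) - 2 * x^2 / 3 * (\<Sum>i\<in>I. w i * a i)
        - 4 * x^2 * b / 3 * (\<Sum>i\<in>I. w i)"
  proof -
    have "(\<Sum>i\<in>I. w i * (2 * x * \<bar>a i - b\<bar> - x^2 * (2 * a i + 4 * b) / 3))
        = (\<Sum>i\<in>I. 2 * x * (w i * \<bar>a i - b\<bar>) - 2 * x^2 / 3 * (w i * a i) - 4 * x^2 * b / 3 * w i)"
      by (rule sum.cong) (auto simp: algebra_simps)
    then show ?thesis by (simp add: sum_subtractf sum_distrib_left)
  qed
  ultimately show ?thesis using mean by (simp add: algebra_simps)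
qed

lemma finite_part:
  assumes "finite V" "partition_on V P" "U \<in> P"
  shows "finite U"
  using assms by (metis Union_upper finite_subset partition_onD1)

lemma partition_on_parts_within:
  assumes P: "partition_on V P" and Q: "partition_on V Q" and "refines_part Q P" and "W \<in> P"
  shows "partition_on W {U\<in>Q. U \<subseteq> W}"
proof (rule partition_onI)
  have "W \<subseteq> \<Union>{U\<in>Q. U \<subseteq> W}"
  proof
    fix v assume "v \<in> W"
    then have "v \<in> \<Union>Q"
      using P Q \<open>W \<in> P\<close> by (auto simp: partition_on_def)
    then obtain U where "U \<in> Q" "v \<in> U" by blast
    moreover obtain W' where "W' \<in> P" "U \<subseteq> W'"
      using \<open>refines_part Q P\<close> \<open>U \<in> Q\<close> by (auto simp: refines_part_def)
    moreover have "W' = W"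
      using P \<open>W \<in> P\<close> \<open>W' \<in> P\<close> \<open>v \<in> W\<close> \<open>v \<in> U\<close> \<open>U \<subseteq> W'\<close>
      unfolding partition_on_def disjoint_def by blast
    ultimately show "v \<in> \<Union>{U\<in>Q. U \<subseteq> W}" by auto
  qed
  then show "\<Union>{U\<in>Q. U \<subseteq> W} = W" by auto
  show "disjnt U U'" if "U \<in> {U\<in>Q. U \<subseteq> W}" "U' \<in> {U\<in>Q. U \<subseteq> W}" "U \<noteq> U'" for U U'
    using Q that unfolding partition_on_def disjoint_def disjnt_def by auto
  show "{} \<notin> {U\<in>Q. U \<subseteq> W}"
    using Q by (auto simp: partition_on_def)
qed

lemma sum_parts_within:
  assumes "finite V" and P: "partition_on V P" and Q: "partition_on V Q" and "refines_part Q P"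
  shows "(\<Sum>W\<in>P. \<Sum>U\<in>{U\<in>Q. U \<subseteq> W}. f U) = (\<Sum>U\<in>Q. f U)"
proof -
  have Q_eq: "Q = (\<Union>W\<in>P. {U\<in>Q. U \<subseteq> W})"
    using \<open>refines_part Q P\<close> by (auto simp: refines_part_def)
  have disj: "{U\<in>Q. U \<subseteq> W} \<inter> {U\<in>Q. U \<subseteq> W'} = {}" if "W \<in> P" "W' \<in> P" "W \<noteq> W'" for W W'
  proof -
    have "W \<inter> W' = {}" using P that unfolding partition_on_def disjoint_def by blast
    then have "U \<notin> Q" if "U \<subseteq> W" "U \<subseteq> W'" for U
      using that partition_onD3[OF Q] by (metis Int_greatest subset_empty)
    then show ?thesis by auto
  qed
  have "finite Q" "finite P"
    using assms finite_elements by blast+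
  then have "(\<Sum>U\<in>(\<Union>W\<in>P. {U\<in>Q. U \<subseteq> W}). f U) = (\<Sum>W\<in>P. \<Sum>U\<in>{U\<in>Q. U \<subseteq> W}. f U)"
    using disj by (intro sum.UNION_disjoint) auto
  then show ?thesis
    by (simp only: Q_eq[symmetric])
qed

lemma sum_sum_parts_within:
  assumes "finite V" and "partition_on V P" and "partition_on V Q" and "refines_part Q P"
  shows "(\<Sum>U\<in>Q. \<Sum>U'\<in>Q. f U U')
       = (\<Sum>W\<in>P. \<Sum>W'\<in>P. \<Sum>U\<in>{U\<in>Q. U \<subseteq> W}. \<Sum>U'\<in>{U'\<in>Q. U' \<subseteq> W'}. f U U')"
proof -
  have "(\<Sum>U\<in>Q. \<Sum>U'\<in>Q. f U U')
      = (\<Sum>W\<in>P. \<Sum>U\<in>{U\<in>Q. U \<subseteq> W}. \<Sum>W'\<in>P. \<Sum>U'\<in>{U'\<in>Q. U' \<subseteq> W'}. f U U')"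
    by (simp only: sum_parts_within[OF assms])
  also have "\<dots> = (\<Sum>W\<in>P. \<Sum>W'\<in>P. \<Sum>U\<in>{U\<in>Q. U \<subseteq> W}. \<Sum>U'\<in>{U'\<in>Q. U' \<subseteq> W'}. f U U')"
    by (intro sum.cong refl sum.swap)
  finally show ?thesis .
qed

lemma epairs_eq_sum:
  assumes "finite X" "finite Y"
  shows "epairs E X Y = (\<Sum>u\<in>X. \<Sum>v\<in>Y. of_bool (E u v))"
proof -
  have "{(u, v) \<in> X \<times> Y. E u v} = X \<times> Y \<inter> {p. E (fst p) (snd p)}" by auto
  then have "epairs E X Y = (\<Sum>p\<in>X \<times> Y. of_bool (E (fst p) (snd p)))"
    using assms unfolding epairs_def by simp
  then show ?thesis by (simp add: sum.cartesian_product case_prod_beta del: sum_of_bool_eq)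
qed

lemma epairs_partition:
  assumes "finite X" "finite Y" "partition_on X A" "partition_on Y B"
  shows "epairs E X Y = (\<Sum>U\<in>A. \<Sum>U'\<in>B. epairs E U U')"
proof -
  have "epairs E X Y = (\<Sum>U\<in>A. \<Sum>u\<in>U. \<Sum>U'\<in>B. \<Sum>v\<in>U'. of_bool (E u v))"
    unfolding epairs_eq_sum[OF assms(1,2)] sum.partition[OF assms(2,4)] sum.partition[OF assms(1,3)] ..
  also have "\<dots> = (\<Sum>U\<in>A. \<Sum>U'\<in>B. \<Sum>u\<in>U. \<Sum>v\<in>U'. of_bool (E u v))"
    by (intro sum.cong refl sum.swap)
  also have "\<dots> = (\<Sum>U\<in>A. \<Sum>U'\<in>B. epairs E U U')"
    using assms finite_part by (intro sum.cong refl epairs_eq_sum[symmetric]) blast+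
  finally show ?thesis .
qed

lemma card_mult_pdens:
  assumes "finite X" "finite Y"
  shows "real (card X) * real (card Y) * pdens E X Y = real (epairs E X Y)"
proof (cases "X = {} \<or> Y = {}")
  case True
  then show ?thesis by (auto simp: epairs_def)
next
  case False
  with assms show ?thesis by (simp add: pdens_def)
qed

lemma card_mult_card_partition:
  assumes "finite W" "finite W'" "partition_on W A" "partition_on W' B"
  shows "real (card W) * real (card W') = (\<Sum>U\<in>A. \<Sum>U'\<in>B. real (card U) * real (card U'))"
proof -
  have "card W = (\<Sum>U\<in>A. card U)" "card W' = (\<Sum>U'\<in>B. card U')"
    using product_partition finite_part assms by metis+
  then show ?thesis by (simp add: sum_product)
qed

lemma doubleton_in_edges: "E u v \<Longrightarrow> {u, v} \<in> edges E"
  unfolding edges_def by (rule CollectI, rule exI[of _ u], rule exI[of _ v]) simp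

lemma epairs_le_twice_card_edges:
  assumes "simple_graph V E"
  shows "epairs E V V \<le> 2 * card (edges E)"
proof -
  define S where "S = {(u, v) \<in> V \<times> V. E u v}"
  define fiber where "fiber e = {p \<in> S. {fst p, snd p} = e}" for e
  have "finite V" "edges E \<subseteq> Pow V"
    using assms by (auto simp: simple_graph_def edges_def)
  then have "finite (edges E)"
    by (meson finite_Pow_iff finite_subset)
  have "S \<subseteq> (\<Union>e\<in>edges E. fiber e)"
  proof
    fix p assume "p \<in> S"
    then obtain u v where "p = (u, v)" "E u v"
      by (auto simp: S_def)
    then have "{fst p, snd p} \<in> edges E"
      using doubleton_in_edges[of E u v] by simp
    with \<open>p \<in> S\<close> show "p \<in> (\<Union>e\<in>edges E. fiber e)"
      by (auto simp: fiber_def)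
  qed
  have "card (fiber e) \<le> 2" if "e \<in> edges E" for e
  proof -
    obtain a b where "e = {a, b}" using \<open>e \<in> edges E\<close> by (auto simp: edges_def)
    then have "fiber e \<subseteq> {(a, b), (b, a)}"
      by (auto simp: fiber_def doubleton_eq_iff)
    then have "card (fiber e) \<le> card {(a, b), (b, a)}"
      by (intro card_mono) auto
    also have "\<dots> \<le> 2"
      by (cases "a = b") simp_all
    finally show ?thesis .
  qed
  then have "card (\<Union>e\<in>edges E. fiber e) \<le> 2 * card (edges E)"
    using card_UN_le[OF \<open>finite (edges E)\<close>, of fiber] sum_bounded_above[of "edges E" "\<lambda>e. card (fiber e)" 2]
    by (simp add: mult.commute)
  moreover have "card S \<le> card (\<Union>e\<in>edges E. fiber e)"
  proof (rule card_mono)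
    show "finite (\<Union>e\<in>edges E. fiber e)"
      by (rule finite_subset[of _ "V \<times> V"]) (use \<open>finite V\<close> in \<open>auto simp: fiber_def S_def\<close>)
  qed fact
  ultimately show ?thesis
    by (simp add: epairs_def S_def)
qed

lemma sum_Hf_pdens_partition_gain:
  assumes "finite W" "finite W'" and A: "partition_on W A" and B: "partition_on W' B"
  shows "2 * x * (\<Sum>U\<in>A. \<Sum>U'\<in>B. real (card U) * real (card U') * \<bar>pdens E U U' - pdens E W W'\<bar>)
           - 2 * x^2 * real (epairs E W W')
         \<le> (\<Sum>U\<in>A. \<Sum>U'\<in>B. real (card U) * real (card U') * (Hf (pdens E U U') - Hf (pdens E W W')))"
proof -
  define w :: "'a set \<times> 'a set \<Rightarrow> real" where "w = (\<lambda>(U, U'). real (card U) * real (card U'))"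
  define d :: "'a set \<times> 'a set \<Rightarrow> real" where "d = (\<lambda>(U, U'). pdens E U U')"
  define b where "b = pdens E W W'"
  have fin: "finite A" "finite B" "\<And>U. U \<in> A \<Longrightarrow> finite U" "\<And>U'. U' \<in> B \<Longrightarrow> finite U'"
    using finite_elements[OF _ A] finite_elements[OF _ B] finite_part[OF _ A] finite_part[OF _ B] assms
    by auto
  have "w i > 0" if "i \<in> A \<times> B" for i
  proof -
    obtain U U' where "i = (U, U')" "U \<in> A" "U' \<in> B"
      using \<open>i \<in> A \<times> B\<close> by blast
    moreover have "U \<noteq> {}" "U' \<noteq> {}"
      using calculation partition_onD3[OF A] partition_onD3[OF B] by blast+
    ultimately show ?thesis
      using fin by (simp add: w_def card_gt_0_iff)
  qed
  moreover have "d i \<ge> 0" for i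
    by (simp add: d_def pdens_def split: prod.splits)
  moreover have sum_w: "b * (\<Sum>i\<in>A \<times> B. w i) = real (epairs E W W')"
    using card_mult_card_partition[OF assms] card_mult_pdens[OF assms(1,2)]
    by (simp add: w_def b_def sum.cartesian_product mult.commute)
  moreover have "(\<Sum>i\<in>A \<times> B. w i * d i) = b * (\<Sum>i\<in>A \<times> B. w i)"
  proof -
    have "(\<Sum>i\<in>A \<times> B. w i * d i) = (\<Sum>U\<in>A. \<Sum>U'\<in>B. real (card U) * real (card U') * pdens E U U')"
      by (simp add: sum.cartesian_product w_def d_def case_prod_beta)
    also have "\<dots> = (\<Sum>U\<in>A. \<Sum>U'\<in>B. real (epairs E U U'))"
      using fin by (intro sum.cong refl card_mult_pdens)
    also have "\<dots> = real (epairs E W W')"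
      using epairs_partition[OF assms] by simp
    finally show ?thesis
      using sum_w by simp
  qed
  ultimately have "2 * x * (\<Sum>i\<in>A \<times> B. w i * \<bar>d i - b\<bar>) - 2 * x^2 * b * (\<Sum>i\<in>A \<times> B. w i)
      \<le> (\<Sum>i\<in>A \<times> B. w i * (Hf (d i) - Hf b))"
    using fin by (intro sum_Hf_mean_gain) (auto simp: b_def pdens_def)
  then show ?thesis
    using sum_w
    by (simp add: sum.cartesian_product w_def d_def b_def case_prod_beta mult.assoc)
qed

lemma Hpart_mult_card_sq:
  assumes "finite V" "partition_on V Q"
  shows "Hpart V E Q * real (card V)^2
       = (\<Sum>U\<in>Q. \<Sum>U'\<in>Q. real (card U) * real (card U') * Hf (pdens E U U'))"
proof (cases "V = {}")
  case True
  with assms show ?thesis by (simp add: partition_on_empty)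
next
  case False
  with assms show ?thesis by (simp add: Hpart_def sum_distrib_right)
qed

lemma Hpart_refinement_gain:
  assumes "finite V" and P: "partition_on V P" and "partition_on V Q" and "refines_part Q P"
  shows "(Hpart V E Q - Hpart V E P) * real (card V)^2
       = (\<Sum>W\<in>P. \<Sum>W'\<in>P. \<Sum>U\<in>{U\<in>Q. U \<subseteq> W}. \<Sum>U'\<in>{U'\<in>Q. U' \<subseteq> W'}.
            real (card U) * real (card U') * (Hf (pdens E U U') - Hf (pdens E W W')))"
proof -
  have "Hpart V E P * real (card V)^2
      = (\<Sum>W\<in>P. \<Sum>W'\<in>P. \<Sum>U\<in>{U\<in>Q. U \<subseteq> W}. \<Sum>U'\<in>{U'\<in>Q. U' \<subseteq> W'}.
            real (card U) * real (card U') * Hf (pdens E W W'))"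
  proof -
    have "real (card W) * real (card W')
        = (\<Sum>U\<in>{U\<in>Q. U \<subseteq> W}. \<Sum>U'\<in>{U'\<in>Q. U' \<subseteq> W'}. real (card U) * real (card U'))"
      if "W \<in> P" "W' \<in> P" for W W'
      using that assms finite_part[OF \<open>finite V\<close> P]
      by (intro card_mult_card_partition partition_on_parts_within) auto
    then show ?thesis
      using assms by (simp add: Hpart_mult_card_sq sum_distrib_right)
  qed
  then show ?thesis
    using assms
    by (simp add: Hpart_mult_card_sq sum_sum_parts_within left_diff_distrib right_diff_distrib
        sum_subtractf)
qed

lemma Hpart_gain_ge:
  assumes "finite V" and P: "partition_on V P" and "partition_on V Q" and "refines_part Q P"
  shows "4 * x * Dpart E Q P - 2 * x^2 * real (epairs E V V)
       \<le> (Hpart V E Q - Hpart V E P) * real (card V)^2"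
proof -
  define dev where "dev W W' = (\<Sum>U\<in>{U\<in>Q. U \<subseteq> W}. \<Sum>U'\<in>{U'\<in>Q. U' \<subseteq> W'}.
      real (card U) * real (card U') * \<bar>pdens E U U' - pdens E W W'\<bar>)" for W W'
  have "(\<Sum>W\<in>P. \<Sum>W'\<in>P. 2 * x * dev W W' - 2 * x^2 * real (epairs E W W'))
      \<le> (Hpart V E Q - Hpart V E P) * real (card V)^2"
    unfolding Hpart_refinement_gain[OF assms] dev_def
    using assms finite_part[OF \<open>finite V\<close> P]
    by (intro sum_mono sum_Hf_pdens_partition_gain partition_on_parts_within) auto
  moreover have "(\<Sum>W\<in>P. \<Sum>W'\<in>P. real (epairs E W W')) = real (epairs E V V)"
    using epairs_partition[OF \<open>finite V\<close> \<open>finite V\<close> P P] by simp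
  moreover have "(\<Sum>W\<in>P. \<Sum>W'\<in>P. dev W W') = 2 * Dpart E Q P"
    by (simp add: Dpart_def dev_def)
  moreover have "(\<Sum>W\<in>P. \<Sum>W'\<in>P. 2 * x * dev W W' - 2 * x^2 * real (epairs E W W'))
      = 2 * x * (\<Sum>W\<in>P. \<Sum>W'\<in>P. dev W W') - 2 * x^2 * (\<Sum>W\<in>P. \<Sum>W'\<in>P. real (epairs E W W'))"
    by (simp add: sum_subtractf sum_distrib_left)
  ultimately show ?thesis
    by simp
qed

theorem lemma3p6:
  fixes V :: "'a set" and E :: "'a \<Rightarrow> 'a \<Rightarrow> bool"
    and P Q :: "'a set set" and x :: real
  assumes "simple_graph V E"
    and "partition_on V P" and "partition_on V Q" and "refines_part Q P"
    and "x \<ge> 0"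
    and "Dpart E Q P \<ge> x * density V E * (real (card V))^2"
  shows "Hpart V E Q - Hpart V E P \<ge> 2 * x^2 * density V E"
proof (cases "card V = 0")
  case True
  then have "V = {}" using assms(1) by (simp add: simple_graph_def)
  with assms(2,3) show ?thesis by (simp add: partition_on_empty Hpart_def density_def)
next
  case False
  define n2 where "n2 = real (card V)^2"
  have "n2 > 0" using False by (simp add: n2_def)
  have "finite V" using assms(1) by (simp add: simple_graph_def)
  have "real (epairs E V V) \<le> density V E * n2"
    using epairs_le_twice_card_edges[OF assms(1)] \<open>n2 > 0\<close> by (simp add: density_def n2_def)
  then have "2 * x^2 * real (epairs E V V) \<le> 2 * x^2 * (density V E * n2)"
    by (simp add: mult_left_mono)
  moreover have "4 * x * (x * density V E * n2) \<le> 4 * x * Dpart E Q P"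
    using assms(5,6) by (simp add: n2_def mult_left_mono)
  ultimately have "2 * x^2 * density V E * n2 \<le> (Hpart V E Q - Hpart V E P) * n2"
    using Hpart_gain_ge[OF \<open>finite V\<close> assms(2-4), of x E]
    by (simp add: n2_def power2_eq_square algebra_simps)
  with \<open>n2 > 0\<close> show ?thesis by simp
qed

end
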